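(* There is an absolute constant $c>0$ such that for every input $(A,W,k)$ of the Randomized Algorithm (with $A\in\mathbb{R}^{d\times d}$, $W\succeq0$, $k$ a positive integer), the set $S=\{i\in[d]:\epsilon_i=1\}$ formed by the algorithm satisfies $\mathbb P(|S|\le k)\ge1-\exp\{-ck\}$.
   Context: Randomized Algorithm (input $A$, PSD $W$, positive integer $k$): set $a_i=\sqrt{W_{ii}}$, $p_i=\min\{1,\ \tfrac23 ka_i/\sum_{j=1}^da_j+\tfrac1{12}kA_{ii}/\mathrm{tr}(A)\}$, and sample independently $\epsilon_i\in\{0,1\}$ with $\mathbb P(\epsilon_i=1)=p_i$; $S:=\{i:\epsilon_i=1\}$ (before any subsequent augmentation step). *)

theory Defs
  imports "HOL-Probability.Probability"
begin

text \<open>d x d real matrices are represented as functions nat => nat => real,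
  only the entries with indices below d being relevant.\<close>

definition psd_mat :: "nat \<Rightarrow> (nat \<Rightarrow> nat \<Rightarrow> real) \<Rightarrow> bool" where
  "psd_mat d W \<longleftrightarrow> (\<forall>i<d. \<forall>j<d. W i j = W j i) \<and>
     (\<forall>x :: nat \<Rightarrow> real. 0 \<le> (\<Sum>i<d. \<Sum>j<d. x i * W i j * x j))"

definition mat_trace :: "nat \<Rightarrow> (nat \<Rightarrow> nat \<Rightarrow> real) \<Rightarrow> real" where
  "mat_trace d A = (\<Sum>i<d. A i i)"

definition alg_p :: "nat \<Rightarrow> (nat \<Rightarrow> nat \<Rightarrow> real) \<Rightarrow> (nat \<Rightarrow> nat \<Rightarrow> real) \<Rightarrow> nat \<Rightarrow> nat \<Rightarrow> real" where
  "alg_p d A W k i = min 1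
     (2/3 * real k * sqrt (W i i) / (\<Sum>j<d. sqrt (W j j))
      + 1/12 * real k * A i i / mat_trace d A)"

definition alg_eps :: "nat \<Rightarrow> (nat \<Rightarrow> nat \<Rightarrow> real) \<Rightarrow> (nat \<Rightarrow> nat \<Rightarrow> real) \<Rightarrow> nat \<Rightarrow> (nat \<Rightarrow> bool) pmf" where
  "alg_eps d A W k = Pi_pmf {..<d} False (\<lambda>i. bernoulli_pmf (alg_p d A W k i))"

definition alg_S :: "nat \<Rightarrow> (nat \<Rightarrow> bool) \<Rightarrow> nat set" where
  "alg_S d \<epsilon> = {i\<in>{..<d}. \<epsilon> i}"

end

theory Submission
  imports Defs
begin

text \<open>The size of \<open>S\<close> is a sum of independent Bernoulli variables whose means add up to at
  most \<open>3k/4\<close>. An exponential moment bound (Chernoff) with base \<open>3/2\<close> gives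
  \<open>E (3/2)^|S| \<le> exp (3k/8)\<close>, and Markov's inequality then bounds \<open>P(|S| > k)\<close> by
  \<open>exp (3k/8) / (3/2)^k = exp (-(ln (3/2) - 3/8) k)\<close>, where \<open>ln (3/2) > 3/8\<close>.\<close>

lemma power_card_eq_prod:
  "finite I \<Longrightarrow> b ^ card {i\<in>I. P i} = (\<Prod>i\<in>I. if P i then b else 1)"
  by (simp add: prod.If_cases Int_def)

lemma expectation_power_card_Pi_pmf_bernoulli:
  fixes b :: real
  assumes "finite I" and "\<And>i. i \<in> I \<Longrightarrow> 0 \<le> p i \<and> p i \<le> 1" and "0 \<le> b"
  shows "measure_pmf.expectation (Pi_pmf I False (\<lambda>i. bernoulli_pmf (p i)))
           (\<lambda>\<epsilon>. b ^ card {i\<in>I. \<epsilon> i}) = (\<Prod>i\<in>I. 1 + (b - 1) * p i)"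
proof -
  have "measure_pmf.expectation (Pi_pmf I False (\<lambda>i. bernoulli_pmf (p i)))
          (\<lambda>\<epsilon>. \<Prod>i\<in>I. if \<epsilon> i then b else 1)
        = (\<Prod>i\<in>I. measure_pmf.expectation (bernoulli_pmf (p i)) (\<lambda>v. if v then b else 1))"
    using assms(1,3) by (intro expectation_prod_Pi_pmf) (auto intro: integrable_measure_pmf_finite)
  also have "\<dots> = (\<Prod>i\<in>I. 1 + (b - 1) * p i)"
    using assms(2) by (intro prod.cong refl) (simp add: algebra_simps)
  finally show ?thesis
    by (simp only: power_card_eq_prod[OF assms(1)])
qed

lemma expectation_power_card_Pi_pmf_bernoulli_le:
  fixes b :: real
  assumes "finite I" and "\<And>i. i \<in> I \<Longrightarrow> 0 \<le> p i \<and> p i \<le> 1" and "1 \<le> b"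
  shows "measure_pmf.expectation (Pi_pmf I False (\<lambda>i. bernoulli_pmf (p i)))
           (\<lambda>\<epsilon>. b ^ card {i\<in>I. \<epsilon> i}) \<le> exp ((b - 1) * (\<Sum>i\<in>I. p i))"
proof -
  have "(\<Prod>i\<in>I. 1 + (b - 1) * p i) \<le> (\<Prod>i\<in>I. exp ((b - 1) * p i))"
    using assms(2,3) by (intro prod_mono) (auto simp: exp_ge_add_one_self)
  also have "\<dots> = exp ((b - 1) * (\<Sum>i\<in>I. p i))"
    using assms(1) by (simp add: exp_sum sum_distrib_left)
  finally show ?thesis
    using expectation_power_card_Pi_pmf_bernoulli[OF assms(1,2)] assms(3) by simp
qed

lemma prob_card_Pi_pmf_bernoulli_ge:
  fixes b :: real
  assumes "finite I" and "\<And>i. i \<in> I \<Longrightarrow> 0 \<le> p i \<and> p i \<le> 1" and "1 \<le> b"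
  shows "measure_pmf.prob (Pi_pmf I False (\<lambda>i. bernoulli_pmf (p i))) {\<epsilon>. n \<le> card {i\<in>I. \<epsilon> i}}
           \<le> exp ((b - 1) * (\<Sum>i\<in>I. p i)) / b ^ n"
proof (cases "b = 1")
  case True
  then show ?thesis by simp
next
  case False
  with assms(3) have "1 < b" by simp
  define M where "M = Pi_pmf I False (\<lambda>i. bernoulli_pmf (p i))"
  define u where "u = (\<lambda>\<epsilon>. b ^ card {i\<in>I. \<epsilon> i})"
  have integrable: "integrable (measure_pmf M) u"
    unfolding u_def M_def power_card_eq_prod[OF assms(1)]
    using assms(1) by (intro integrable_prod_Pi_pmf) (auto intro: integrable_measure_pmf_finite)
  have "{\<epsilon>. n \<le> card {i\<in>I. \<epsilon> i}} = {\<epsilon> \<in> space (measure_pmf M). b ^ n \<le> u \<epsilon>}"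
    using \<open>1 < b\<close> by (auto simp: u_def)
  then have "measure_pmf.prob M {\<epsilon>. n \<le> card {i\<in>I. \<epsilon> i}} \<le> measure_pmf.expectation M u / b ^ n"
    using \<open>1 < b\<close> by (simp only:)
      (rule integral_Markov_inequality_measure[OF integrable, of UNIV], auto simp: u_def)
  also have "\<dots> \<le> exp ((b - 1) * (\<Sum>i\<in>I. p i)) / b ^ n"
    using expectation_power_card_Pi_pmf_bernoulli_le[OF assms] \<open>1 < b\<close>
    by (intro divide_right_mono) (simp_all add: M_def u_def)
  finally show ?thesis
    unfolding M_def .
qed

lemma psd_mat_diag_nonneg:
  assumes "psd_mat d W" and "i < d"
  shows "0 \<le> W i i"
proof -
  define x where "x = (\<lambda>j. if j = i then 1 else (0::real))"
  have "0 \<le> (\<Sum>a<d. \<Sum>b<d. x a * W a b * x b)"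
    using assms(1) unfolding psd_mat_def by blast
  also have "\<dots> = W i i"
    using assms(2) unfolding x_def
    by (simp add: if_distrib[of "\<lambda>c. c * _"] if_distrib[of "\<lambda>c. _ * c"] sum.delta cong: if_cong)
  finally show ?thesis .
qed

lemma alg_p_bounds:
  assumes "psd_mat d W" and "\<forall>i<d. 0 \<le> A i i" and "i < d"
  shows "0 \<le> alg_p d A W k i \<and> alg_p d A W k i \<le> 1"
proof -
  have "0 \<le> (\<Sum>j<d. sqrt (W j j))"
    by (intro sum_nonneg) (auto intro: psd_mat_diag_nonneg[OF assms(1)])
  moreover have "0 \<le> mat_trace d A"
    unfolding mat_trace_def using assms(2) by (intro sum_nonneg) auto
  ultimately show ?thesis
    using psd_mat_diag_nonneg[OF assms(1,3)] assms(2,3) unfolding alg_p_def by simp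
qed

text \<open>No hypotheses are needed: \<open>x / x \<le> 1\<close> holds also for the junk value \<open>0 / 0 = 0\<close>.\<close>

lemma sum_alg_p_le:
  "(\<Sum>i<d. alg_p d A W k i) \<le> 3/4 * real k"
proof -
  define S where "S = (\<Sum>j<d. sqrt (W j j))"
  define T where "T = mat_trace d A"
  have "(\<Sum>i<d. alg_p d A W k i)
        \<le> (\<Sum>i<d. 2/3 * real k * sqrt (W i i) / S + 1/12 * real k * A i i / T)"
    unfolding alg_p_def S_def T_def by (intro sum_mono) simp
  also have "\<dots> = 2/3 * real k * (S / S) + 1/12 * real k * (T / T)"
    unfolding sum.distrib S_def T_def mat_trace_def
    by (simp add: sum_divide_distrib[symmetric] sum_distrib_left[symmetric] mult.assoc)
  also have "\<dots> \<le> 2/3 * real k + 1/12 * real k"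
    by (intro add_mono mult_left_mono) (auto simp: divide_le_eq_1)
  finally show ?thesis by simp
qed

lemma ln_three_halves_gt: "3/8 < ln (3/2::real)"
proof -
  have "1 + (-1/8::real) \<le> exp (-1/8)"
    by (rule exp_ge_add_one_self)
  then have "exp (1/8::real) \<le> 8/7"
    by (simp add: exp_minus field_simps)
  then have "exp (1/8::real) ^ 3 \<le> (8/7) ^ 3"
    by (intro power_mono) auto
  moreover have "exp (1/8::real) ^ 3 = exp (3/8)"
    by (subst exp_of_nat_mult [symmetric]) simp
  ultimately have "exp (3/8::real) < 3/2"
    by (simp add: power3_eq_cube)
  then show ?thesis
    by (metis exp_gt_zero ln_exp ln_strict_mono)
qed

lemma prob_card_alg_S_gt:
  assumes "psd_mat d W" and "\<forall>i<d. 0 \<le> A i i"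
  shows "measure_pmf.prob (alg_eps d A W k) {\<epsilon>. Suc k \<le> card (alg_S d \<epsilon>)}
           \<le> exp (- (ln (3/2) - 3/8) * real k)"
proof -
  have "measure_pmf.prob (alg_eps d A W k) {\<epsilon>. Suc k \<le> card (alg_S d \<epsilon>)}
        \<le> exp ((3/2 - 1) * (\<Sum>i<d. alg_p d A W k i)) / (3/2) ^ Suc k"
    unfolding alg_eps_def alg_S_def
    by (rule prob_card_Pi_pmf_bernoulli_ge) (auto simp: alg_p_bounds[of d W A, OF assms])
  also have "\<dots> \<le> exp (3/8 * real k) / (3/2) ^ k"
    using sum_alg_p_le[of d A W k] by (intro frac_le) auto
  also have "(3/2::real) ^ k = exp (ln (3/2) * real k)"
    by (simp add: mult.commute[of "ln _"] exp_of_nat_mult)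
  also have "exp (3/8 * real k) / \<dots> = exp (- (ln (3/2) - 3/8) * real k)"
    by (simp add: exp_diff[symmetric] algebra_simps)
  finally show ?thesis .
qed

theorem proposition5:
  "\<exists>c>0. \<forall>(d::nat) (A::nat \<Rightarrow> nat \<Rightarrow> real) (W::nat \<Rightarrow> nat \<Rightarrow> real) (k::nat).
     psd_mat d W \<longrightarrow> (\<forall>i<d. 0 \<le> A i i) \<longrightarrow> 0 < k \<longrightarrow>
     measure_pmf.prob (alg_eps d A W k) {\<epsilon>. card (alg_S d \<epsilon>) \<le> k}
       \<ge> 1 - exp (- c * real k)"
proof (intro exI[of _ "ln (3/2) - 3/8"] conjI allI impI)
  show "0 < ln (3/2::real) - 3/8"
    using ln_three_halves_gt by simp
  fix d k :: nat and A W :: "nat \<Rightarrow> nat \<Rightarrow> real"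
  assume W: "psd_mat d W" and A: "\<forall>i<d. 0 \<le> A i i"
  let ?M = "alg_eps d A W k" and ?large = "{\<epsilon>. Suc k \<le> card (alg_S d \<epsilon>)}"
  have "{\<epsilon>. card (alg_S d \<epsilon>) \<le> k} = UNIV - ?large"
    by auto
  then have "measure_pmf.prob ?M {\<epsilon>. card (alg_S d \<epsilon>) \<le> k} = 1 - measure_pmf.prob ?M ?large"
    using measure_pmf.prob_compl[of ?large ?M] by simp
  then show "1 - exp (- (ln (3/2) - 3/8) * real k) \<le> measure_pmf.prob ?M {\<epsilon>. card (alg_S d \<epsilon>) \<le> k}"
    using prob_card_alg_S_gt[of d W A k, OF W A] by simp
qed

end
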